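(* For $m,l,r\in\mathbb{N}$ with $l\le m$ and $1\le r\le m$, \begin{align*} x^{-l}\Delta^{(-m-1)}(-t^2)y^{-r}&=q^{2l}[m+1]_q\,t^2W^-(q^mt^2)\star x^{-l}\Delta^{(-m)}(-q^{-1}t^2)y^{1-r}\\ &\quad+q^{l-1}[l]_q[m+1]_q\,t^2G(q^mt^2)\star x^{1-l}\Delta^{(-m)}(-q^{-1}t^2)y^{1-r},\\ y^{-l}\widetilde\Delta^{(-m-1)}(-t^2)x^{-r}&=q^{2l}[m+1]_q\,t^2W^+(q^mt^2)\star y^{-l}\widetilde\Delta^{(-m)}(-q^{-1}t^2)x^{1-r}\\ &\quad+q^{l-1}[l]_q[m+1]_q\,t^2\widetilde G(q^mt^2)\star y^{1-l}\widetilde\Delta^{(-m)}(-q^{-1}t^2)x^{1-r}. \end{align*}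
   Context: $\mathbb{F}$ is a field of characteristic zero, $q\in\mathbb{F}$ nonzero and not a root of unity. $[n]_q=\frac{q^n-q^{-n}}{q-q^{-1}}$. $\mathbb{V}$ is the free algebra on letters $x,y$ with basis the words ($\mathbf 1$ the empty word). The $q$-shuffle product $\star$ on $\mathbb{V}$ is the bilinear product with $\mathbf 1\star v=v\star\mathbf 1=v$ and, for nonempty words $u=u_1\cdots u_r$, $v=v_1\cdots v_s$, $u\star v=u_1((u_2\cdots u_r)\star v)+v_1(u\star(v_2\cdots v_s))q^{\langle v_1,u_1\rangle+\dots+\langle v_1,u_r\rangle}$ (juxtaposition = concatenation), where $\langle x,x\rangle=\langle y,y\rangle=2$, $\langle x,y\rangle=\langle y,x\rangle=-2$. It is extended to formal power series in the indeterminate $t$ coefficientwise (Cauchy product). Generating functions: $W^-(t)=\sum_{n\ge0}x(yx)^nt^n$, $W^+(t)=\sum_{n\ge0}y(xy)^nt^n$, $\widetilde G(t)=\sum_{n\ge0}(xy)^nt^n$, $G(t)=\sum_{n\ge0}(yx)^nt^n$ (with $(xy)^0=(yx)^0=\mathbf 1$); $W^-(q^mt^2)$ denotes substitution of $q^mt^2$ for $t$, etc. $\bar x=1,\bar y=-1$; a word $a_1\cdots a_n$ is Catalan if $\bar a_1+\dots+\bar a_i\ge0$ ($i<n$) and $\bar a_1+\dots+\bar a_n=0$; $\mathrm{Cat}_n$ = Catalan words of length $2n$. $\Delta^{(k)}_n=\sum_{a_1\cdots a_{2n}\in\mathrm{Cat}_n}\prod_{i=1}^{2n}[\bar a_1+\dots+\bar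 a_{i-1}+k(\bar a_i+1)/2]_q\,a_1\cdots a_{2n}$, $\Delta^{(k)}(t)=\sum_n\Delta^{(k)}_nt^n$; $\widetilde\Delta^{(k)}_n$ is obtained from $\Delta^{(k)}_n$ by interchanging $x,y$ in every word, $\widetilde\Delta^{(k)}(t)=\sum_n\widetilde\Delta^{(k)}_nt^n$. Deletion: $x^{-1}w$ deletes a leading $x$ of a word $w$ (result $0$ if $w$ does not start with $x$, including $w=\mathbf 1$); $y^{-1}w$, $wx^{-1}$, $wy^{-1}$ analogously (leading $y$, trailing $x$, trailing $y$); extended linearly and coefficientwise; exponent $-k<0$ means $k$-fold application, exponent $0$ the identity, and a positive exponent $x^{k}w$ (resp. $y^kw$) means concatenation with $x^k$ (resp. $y^k$) on the left (this only occurs for $l=0$, where that summand has the factor $[0]_q=0$). *)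

theory Defs
  imports Main
begin

datatype letter = X | Y

type_synonym word = "letter list"
(* an element of V: coefficient function on words (the values used below are finitely supported) *)
type_synonym 'a vec = "word \<Rightarrow> 'a"
(* a formal power series in t with coefficients in V *)
type_synonym 'a ser = "nat \<Rightarrow> 'a vec"

definition qint :: "'a::field \<Rightarrow> int \<Rightarrow> 'a" where
  "qint q n = (q powi n - q powi (-n)) / (q - inverse q)"

definition pairing :: "letter \<Rightarrow> letter \<Rightarrow> int" where
  "pairing a b = (if a = b then 2 else -2)"

definition bar :: "letter \<Rightarrow> int" where
  "bar a = (if a = X then 1 else -1)"

definition swap :: "letter \<Rightarrow> letter" where
  "swap a = (if a = X then Y else X)"

definition single :: "word \<Rightarrow> 'a::zero_neq_one vec" where
  "single u = (\<lambda>w. if w = u then 1 else 0)"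

definition prepend :: "letter \<Rightarrow> 'a::zero vec \<Rightarrow> 'a vec" where
  "prepend a f = (\<lambda>w. case w of [] \<Rightarrow> 0 | c # w' \<Rightarrow> (if c = a then f w' else 0))"

fun qsh :: "'a::field \<Rightarrow> word \<Rightarrow> word \<Rightarrow> 'a vec" where
  "qsh q [] v = single v"
| "qsh q (a # u) [] = single (a # u)"
| "qsh q (a # u) (b # v) =
     (\<lambda>w. prepend a (qsh q u (b # v)) w
        + q powi (sum_list (map (pairing b) (a # u))) * prepend b (qsh q (a # u) v) w)"

definition vmul :: "'a::field \<Rightarrow> 'a vec \<Rightarrow> 'a vec \<Rightarrow> 'a vec" where
  "vmul q f g = (\<lambda>w. \<Sum>u\<in>{u. set u \<subseteq> {X, Y} \<and> length u \<le> length w}.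
       \<Sum>v\<in>{v. set v \<subseteq> {X, Y} \<and> length v \<le> length w}. f u * g v * qsh q u v w)"

definition smul :: "'a::field \<Rightarrow> 'a ser \<Rightarrow> 'a ser \<Rightarrow> 'a ser" where
  "smul q F G = (\<lambda>n w. \<Sum>i\<le>n. vmul q (F i) (G (n - i)) w)"

definition sadd :: "'a::field ser \<Rightarrow> 'a ser \<Rightarrow> 'a ser" where
  "sadd F G = (\<lambda>n w. F n w + G n w)"

definition sscale :: "'a::field \<Rightarrow> 'a ser \<Rightarrow> 'a ser" where
  "sscale c F = (\<lambda>n w. c * F n w)"

(* F(c t^2) *)
definition subst_sq :: "'a::field \<Rightarrow> 'a ser \<Rightarrow> 'a ser" where
  "subst_sq c F = (\<lambda>j w. if even j then c ^ (j div 2) * F (j div 2) w else 0)"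

definition shift2 :: "'a::field ser \<Rightarrow> 'a ser" where
  "shift2 F = (\<lambda>j w. if 2 \<le> j then F (j - 2) w else 0)"

(* a^k (.) for k : int: k < 0 deletes |k| leading a's, k \<ge> 0 concatenates a^k on the left;
   applied coefficientwise *)
definition lop :: "letter \<Rightarrow> int \<Rightarrow> 'a::field ser \<Rightarrow> 'a ser" where
  "lop a k F = (\<lambda>n w. if k < 0 then F n (replicate (nat (-k)) a @ w)
       else (if take (nat k) w = replicate (nat k) a \<and> nat k \<le> length w
             then F n (drop (nat k) w) else 0))"

(* (.) a^k : k < 0 deletes |k| trailing a's, k \<ge> 0 concatenates a^k on the right *)
definition rop :: "letter \<Rightarrow> int \<Rightarrow> 'a::field ser \<Rightarrow> 'a ser" where
  "rop a k F = (\<lambda>n w. if k < 0 then F n (w @ replicate (nat (-k)) a)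
       else (if drop (length w - nat k) w = replicate (nat k) a \<and> nat k \<le> length w
             then F n (take (length w - nat k) w) else 0))"

definition catalan :: "word \<Rightarrow> bool" where
  "catalan w \<longleftrightarrow> (\<forall>i. 1 \<le> i \<and> i < length w \<longrightarrow> 0 \<le> sum_list (map bar (take i w)))
     \<and> sum_list (map bar w) = 0"

definition Cat :: "nat \<Rightarrow> word set" where
  "Cat n = {w. length w = 2 * n \<and> catalan w}"

definition DeltaN :: "'a::field \<Rightarrow> int \<Rightarrow> nat \<Rightarrow> 'a vec" where
  "DeltaN q k n = (\<lambda>w. if w \<in> Cat n then
      (\<Prod>i<2 * n. qint q (sum_list (map bar (take i w)) + k * (bar (w ! i) + 1) div 2))
    else 0)"

definition DeltaS :: "'a::field \<Rightarrow> int \<Rightarrow> 'a ser" where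
  "DeltaS q k = (\<lambda>n. DeltaN q k n)"

definition DeltaTS :: "'a::field \<Rightarrow> int \<Rightarrow> 'a ser" where
  "DeltaTS q k = (\<lambda>n w. DeltaN q k n (map swap w))"

definition Wminus :: "'a::field ser" where
  "Wminus = (\<lambda>n. single (X # concat (replicate n [Y, X])))"

definition Wplus :: "'a::field ser" where
  "Wplus = (\<lambda>n. single (Y # concat (replicate n [X, Y])))"

definition Gt :: "'a::field ser" where
  "Gt = (\<lambda>n. single (concat (replicate n [X, Y])))"

definition G :: "'a::field ser" where
  "G = (\<lambda>n. single (concat (replicate n [Y, X])))"

end

(* Read a word as a lattice path, x a step up and y a step down. The coefficient of a word v in
   x^(-l) Delta^(k)(c t^2) y^(-r) is a product of step weights along the path v from height l to
   height r, times the weights of the deleted x^l and y^r; the Catalan condition comes for free,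
   because a down-step at height 0 has weight [0]_q = 0. Likewise t^2 W^-(q^m t^2) and t^2 G(q^m t^2)
   are the zigzag paths 0 -> 1 and 1 -> 1 in the strip of heights {0, 1}. In every series involved
   the t-degree is determined by the word length, so the identity reduces to one between coefficient
   functions of words. That one is proved by induction on the word: the coefficient of c w in a
   q-shuffle product splits according to which factor supplies the first letter c, and the step
   weights of both sides match by [z+1]_q = q^z + q^(-1) [z]_q. The second identity is the image of
   the first under the letter swap x <-> y, an automorphism of the q-shuffle algebra. *)

theory Submission
  imports Defs
begin

definition height :: "word \<Rightarrow> int" where
  "height w = sum_list (map bar w)"

lemma height_simps [simp]:
  "height [] = 0" "height (c # w) = bar c + height w" "height (u @ v) = height u + height v"
  by (simp_all add: height_def)

lemma bar_simps [simp]: "bar X = 1" "bar Y = -1"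
  by (simp_all add: bar_def)

lemma height_replicate [simp]:
  "height (replicate n X) = int n" "height (replicate n Y) = - int n"
  by (induction n) simp_all

lemma count_list_X_height: "2 * int (count_list w X) = int (length w) + height w"
proof (induction w)
  case (Cons c w)
  then show ?case by (cases c) simp_all
qed simp

lemma sum_list_map_pairing: "sum_list (map (pairing b) u) = 2 * bar b * height u"
proof (induction u)
  case (Cons a u)
  then show ?case by (cases a; cases b) (simp_all add: pairing_def algebra_simps)
qed simp

lemma qsh_Nil2 [simp]: "qsh q u [] = single u"
  by (cases u) simp_all

lemma qsh_length:
  assumes "qsh q u v w \<noteq> 0"
  shows "length w = length u + length v"
  using assms
proof (induction q u v arbitrary: w rule: qsh.induct)
  case (3 q a u b v)
  obtain c w' where w: "w = c # w'"
    using "3.prems" by (cases w) (simp_all add: prepend_def)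
  have "qsh q u (b # v) w' \<noteq> 0 \<or> qsh q (a # u) v w' \<noteq> 0"
    using "3.prems" by (auto simp: w prepend_def split: if_splits)
  then show ?case using "3.IH" w by fastforce
qed (auto simp: single_def split: if_splits)

lemma qsh_at_Nil: "qsh q u v [] = (if u = [] \<and> v = [] then 1 else 0)"
  by (cases u; cases v) (simp_all add: single_def prepend_def)

lemma qsh_at_Cons: "qsh q u v (c # w) =
    (if u \<noteq> [] \<and> hd u = c then qsh q (tl u) v w else 0)
  + (if v \<noteq> [] \<and> hd v = c then q powi (2 * bar c * height u) * qsh q u (tl v) w else 0)"
proof (cases u)
  case Nil
  then show ?thesis by (cases v) (auto simp: single_def)
next
  case (Cons a u')
  then show ?thesis
    by (cases v) (simp_all add: single_def prepend_def sum_list_map_pairing del: sum_list.Cons list.map)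
qed

lemma set_word_subset [simp]: "set (u :: word) \<subseteq> {X, Y}"
  using letter.exhaust by blast

definition words_le :: "nat \<Rightarrow> word set" where
  "words_le n = {u. length u \<le> n}"

lemma finite_words_le [simp]: "finite (words_le n)"
  using finite_lists_length_le[of "{X, Y}" n] by (simp add: words_le_def)

lemma words_le_Suc: "words_le (Suc n) = insert [] (Cons X ` words_le n \<union> Cons Y ` words_le n)"
proof -
  have "u \<in> words_le (Suc n) \<longleftrightarrow> u \<in> insert [] (Cons X ` words_le n \<union> Cons Y ` words_le n)" for u
  proof (cases u)
    case (Cons a u')
    then show ?thesis by (cases a) (auto simp: words_le_def)
  qed (simp add: words_le_def)
  then show ?thesis by blast
qed

lemma sum_words_le_Suc:
  "(\<Sum>u\<in>words_le (Suc n). F u) = F [] + (\<Sum>u\<in>words_le n. F (X # u)) + (\<Sum>u\<in>words_le n. F (Y # u))"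
proof -
  have "(\<Sum>u\<in>words_le (Suc n). F u) = F [] + (\<Sum>u\<in>Cons X ` words_le n \<union> Cons Y ` words_le n. F u)"
    unfolding words_le_Suc by (subst sum.insert) auto
  also have "\<dots> = F [] + ((\<Sum>u\<in>Cons X ` words_le n. F u) + (\<Sum>u\<in>Cons Y ` words_le n. F u))"
    by (subst sum.union_disjoint) auto
  finally show ?thesis by (simp add: sum.reindex add.assoc)
qed

lemma vmul_eq_sum_words_le:
  assumes "length w \<le> M" and "length w \<le> N"
  shows "vmul q f g w = (\<Sum>u\<in>words_le M. \<Sum>v\<in>words_le N. f u * g v * qsh q u v w)"
proof -
  have vanish: "qsh q u v w = 0" if "u \<notin> words_le (length w) \<or> v \<notin> words_le (length w)" for u v
    using that by (cases "qsh q u v w = 0") (auto simp: words_le_def dest: qsh_length)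
  have "vmul q f g w = (\<Sum>u\<in>words_le (length w). \<Sum>v\<in>words_le (length w). f u * g v * qsh q u v w)"
    by (simp add: vmul_def words_le_def)
  also have "\<dots> = (\<Sum>u\<in>words_le M. \<Sum>v\<in>words_le N. f u * g v * qsh q u v w)"
    using assms vanish
    by (intro sum.mono_neutral_cong_left ballI sum.neutral finite_words_le) (auto simp: words_le_def)
  finally show ?thesis .
qed

lemma vmul_Nil: "vmul q f g [] = f [] * g []"
proof -
  have "words_le 0 = {[]}" by (auto simp: words_le_def)
  then show ?thesis by (simp add: vmul_eq_sum_words_le[of "[]" 0 0] qsh_at_Nil single_def)
qed

lemma vmul_Cons: "vmul q f g (c # w) = vmul q (\<lambda>u. f (c # u)) g w
    + vmul q (\<lambda>u. q powi (2 * bar c * height u) * f u) (\<lambda>v. g (c # v)) w"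
proof -
  let ?n = "length w"
  have "vmul q f g (c # w) =
      (\<Sum>u\<in>words_le (Suc ?n). \<Sum>v\<in>words_le (Suc ?n).
         f u * g v * (if u \<noteq> [] \<and> hd u = c then qsh q (tl u) v w else 0))
    + (\<Sum>u\<in>words_le (Suc ?n). \<Sum>v\<in>words_le (Suc ?n).
         f u * g v * (if v \<noteq> [] \<and> hd v = c then q powi (2 * bar c * height u) * qsh q u (tl v) w else 0))"
    by (simp add: vmul_eq_sum_words_le[of _ "Suc ?n" "Suc ?n"] qsh_at_Cons distrib_left sum.distrib)
  also have "(\<Sum>u\<in>words_le (Suc ?n). \<Sum>v\<in>words_le (Suc ?n).
         f u * g v * (if u \<noteq> [] \<and> hd u = c then qsh q (tl u) v w else 0))
      = (\<Sum>u\<in>words_le ?n. \<Sum>v\<in>words_le (Suc ?n). f (c # u) * g v * qsh q u v w)"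
    by (subst sum_words_le_Suc) (cases c; simp)
  also have "\<dots> = vmul q (\<lambda>u. f (c # u)) g w"
    by (rule vmul_eq_sum_words_le[symmetric]) simp_all
  also have "(\<Sum>u\<in>words_le (Suc ?n). \<Sum>v\<in>words_le (Suc ?n).
         f u * g v * (if v \<noteq> [] \<and> hd v = c then q powi (2 * bar c * height u) * qsh q u (tl v) w else 0))
      = (\<Sum>u\<in>words_le (Suc ?n). \<Sum>v\<in>words_le ?n.
         (q powi (2 * bar c * height u) * f u) * g (c # v) * qsh q u v w)"
    by (rule sum.cong[OF refl], subst sum_words_le_Suc) (cases c; simp add: ac_simps)
  also have "\<dots> = vmul q (\<lambda>u. q powi (2 * bar c * height u) * f u) (\<lambda>v. g (c # v)) w"
    by (rule vmul_eq_sum_words_le[symmetric]) simp_all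
  finally show ?thesis .
qed

lemma vmul_scale_left: "vmul q (\<lambda>u. a * f u) g = (\<lambda>w. a * vmul q f g w)"
  by (simp add: vmul_def sum_distrib_left ac_simps)

lemma vmul_scale_right: "vmul q f (\<lambda>v. a * g v) = (\<lambda>w. a * vmul q f g w)"
  by (simp add: vmul_def sum_distrib_left ac_simps)

definition homogeneous :: "nat \<Rightarrow> 'a::field vec \<Rightarrow> 'a ser" where
  "homogeneous d f = (\<lambda>n w. if n = length w + d then f w else 0)"

lemma homogeneous_cong:
  assumes "d = e" and "\<And>w. f w = g w"
  shows "homogeneous d f = homogeneous e g"
proof -
  have "f = g" using assms(2) ..
  with assms(1) show ?thesis by simp
qed

lemma smul_homogeneous:
  "smul q (homogeneous d f) (homogeneous e g) = homogeneous (d + e) (vmul q f g)"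
proof (intro ext)
  fix n w
  have summand: "(\<Sum>i\<le>n. homogeneous d f i u * homogeneous e g (n - i) v * qsh q u v w)
      = (if n = length w + (d + e) then f u * g v * qsh q u v w else 0)" for u v
  proof (cases "qsh q u v w = 0")
    case False
    then have "length w = length u + length v" by (rule qsh_length)
    then show ?thesis
      by (auto simp: homogeneous_def if_distrib[of "\<lambda>x. x * _"] sum.delta cong: if_cong)
  qed simp
  have "smul q (homogeneous d f) (homogeneous e g) n w = (\<Sum>u\<in>words_le (length w).
      \<Sum>v\<in>words_le (length w). \<Sum>i\<le>n. homogeneous d f i u * homogeneous e g (n - i) v * qsh q u v w)"
    by (simp add: smul_def vmul_eq_sum_words_le[of w "length w" "length w"] sum.swap[of _ "{..n}"])
  also have "\<dots> = homogeneous (d + e) (vmul q f g) n w"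
    unfolding summand
    by (cases "n = length w + (d + e)") (simp_all add: homogeneous_def vmul_eq_sum_words_le[of w "length w" "length w"])
  finally show "smul q (homogeneous d f) (homogeneous e g) n w = homogeneous (d + e) (vmul q f g) n w" .
qed

lemma sscale_homogeneous: "sscale c (homogeneous d f) = homogeneous d (\<lambda>w. c * f w)"
  by (simp add: sscale_def homogeneous_def fun_eq_iff)

lemma sadd_homogeneous: "sadd (homogeneous d f) (homogeneous d g) = homogeneous d (\<lambda>w. f w + g w)"
  by (simp add: sadd_def homogeneous_def fun_eq_iff)

lemma qint_0 [simp]: "qint q 0 = 0"
  by (simp add: qint_def)

lemma qint_uminus: "qint q (- z) = - qint q z"
  by (simp add: qint_def diff_divide_distrib)

(* For q^2 = 1 the definition of qint divides by zero, making qint q z = 0 identically. *)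
lemma qint_add_1:
  fixes q :: "'a::field"
  assumes "q \<noteq> 0" and "q - inverse q \<noteq> 0"
  shows "qint q (z + 1) = q powi z + inverse q * qint q z"
proof -
  have up: "q powi (z + 1) = q powi z * q"
    using assms(1) by (simp add: power_int_add_1)
  have "q powi (- (z + 1)) = inverse (q powi z * q)"
    by (simp only: power_int_minus up)
  with up assms show ?thesis
    by (simp add: qint_def power_int_minus field_simps)
qed

lemma powi_mult_qint_add_1:
  fixes q :: "'a::field"
  assumes "q \<noteq> 0" and "q - inverse q \<noteq> 0"
  shows "q powi a * qint q (z + 1) = q powi (a - 1) * qint q z + q powi (a + z)"
proof -
  have "q powi a = q powi (a - 1) * q"
    using power_int_minus_mult[of q a] assms(1) by simp
  moreover have "q powi a * q powi z = q powi (a + z)"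
    using assms(1) by (simp add: power_int_add)
  ultimately show ?thesis
    using qint_add_1[OF assms, of z] assms(1) by (simp add: algebra_simps)
qed

definition qfact :: "'a::field \<Rightarrow> nat \<Rightarrow> 'a" where
  "qfact q n = (\<Prod>i=1..n. qint q (int i))"

lemma qfact_Suc: "qfact q (Suc n) = qint q (int (Suc n)) * qfact q n"
  by (simp add: qfact_def prod.cl_ivl_Suc)

lemma prod_qint_Suc:
  fixes q :: "'a::field"
  assumes "q \<noteq> 0"
  shows "(\<Prod>i<Suc l. qint q (int m + 1 - int i))
    = q ^ l * qint q (int m + 1) * (\<Prod>i<l. inverse q * qint q (int m - int i))"
proof -
  have "(\<Prod>i<Suc l. qint q (int m + 1 - int i)) = qint q (int m + 1) * (\<Prod>i<l. qint q (int m - int i))"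
    by (simp add: prod.lessThan_Suc_shift del: prod.lessThan_Suc)
  moreover have "q ^ l * (\<Prod>i<l. inverse q * qint q (int m - int i)) = (\<Prod>i<l. qint q (int m - int i))"
    using assms by (simp add: prod.distrib power_inverse flip: mult.assoc)
  ultimately show ?thesis
    by (simp add: ac_simps)
qed

fun path_weight :: "(int \<Rightarrow> 'a::comm_semiring_1) \<Rightarrow> (int \<Rightarrow> 'a) \<Rightarrow> int \<Rightarrow> word \<Rightarrow> 'a" where
  "path_weight fx fy h [] = 1"
| "path_weight fx fy h (c # w) = (if c = X then fx h else fy h) * path_weight fx fy (h + bar c) w"

definition path_weight_between ::
    "(int \<Rightarrow> 'a::comm_semiring_1) \<Rightarrow> (int \<Rightarrow> 'a) \<Rightarrow> int \<Rightarrow> int \<Rightarrow> word \<Rightarrow> 'a" where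
  "path_weight_between fx fy s e w = (if s + height w = e then path_weight fx fy s w else 0)"

lemma path_weight_between_Nil [simp]: "path_weight_between fx fy s e [] = (if s = e then 1 else 0)"
  by (simp add: path_weight_between_def)

lemma path_weight_between_Cons:
  "path_weight_between fx fy s e (c # w) = (if c = X then fx s else fy s) * path_weight_between fx fy (s + bar c) e w"
  by (simp add: path_weight_between_def algebra_simps)

lemma path_weight_append: "path_weight fx fy h (u @ v) = path_weight fx fy h u * path_weight fx fy (h + height u) v"
  by (induction u arbitrary: h) (simp_all add: algebra_simps)

lemma path_weight_scale_X: "path_weight (\<lambda>h. c * fx h) fy h w = c ^ count_list w X * path_weight fx fy h w"
  by (induction w arbitrary: h) (simp_all add: algebra_simps)

lemma path_weight_replicate_X: "path_weight fx fy h (replicate l X) = (\<Prod>i<l. fx (h + int i))"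
  by (induction l arbitrary: h) (simp_all add: prod.lessThan_Suc_shift algebra_simps del: prod.lessThan_Suc)

lemma path_weight_replicate_Y: "path_weight fx fy (int b) (replicate b Y) = (\<Prod>i=1..b. fy (int i))"
  by (induction b) (simp_all add: prod.cl_ivl_Suc ac_simps)

lemma path_weight_eq_prod:
  "path_weight (\<lambda>h. fy (h + k)) fy h w =
    (\<Prod>i<length w. fy (h + height (take i w) + k * (bar (w ! i) + 1) div 2))"
proof (induction w arbitrary: h)
  case (Cons c w)
  then show ?case
    by (cases c) (simp_all add: prod.lessThan_Suc_shift algebra_simps del: prod.lessThan_Suc)
qed simp

lemma path_weight_below_zero:
  assumes "fy 0 = 0" and "0 \<le> h" and "h + height (take i w) < 0"
  shows "path_weight fx fy h w = 0"
  using assms(2,3)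
proof (induction w arbitrary: h i)
  case (Cons c w)
  show ?case
  proof (cases "c = Y \<and> h = 0")
    case False
    then have "0 \<le> h + bar c" using Cons.prems(1) by (cases c) auto
    moreover have "(h + bar c) + height (take (i - 1) w) < 0"
      using Cons.prems by (cases i) simp_all
    ultimately show ?thesis using Cons.IH by simp
  qed (simp add: assms(1))
qed simp

lemma vmul_path_weight_between_Cons:
  "vmul q (path_weight_between fa ga s e) (path_weight_between fb gb s' e') (c # w) =
     (if c = X then fa s else ga s) * vmul q (path_weight_between fa ga (s + bar c) e) (path_weight_between fb gb s' e') w
   + q powi (2 * bar c * (e - s)) * (if c = X then fb s' else gb s')
       * vmul q (path_weight_between fa ga s e) (path_weight_between fb gb (s' + bar c) e') w"
proof -
  have exponent: "(\<lambda>u. q powi (2 * bar c * height u) * path_weight_between fa ga s e u)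
      = (\<lambda>u. q powi (2 * bar c * (e - s)) * path_weight_between fa ga s e u)"
  proof
    fix u
    show "q powi (2 * bar c * height u) * path_weight_between fa ga s e u
      = q powi (2 * bar c * (e - s)) * path_weight_between fa ga s e u"
      by (cases "s + height u = e") (auto simp: path_weight_between_def)
  qed
  show ?thesis
    unfolding vmul_Cons exponent path_weight_between_Cons vmul_scale_left vmul_scale_right by (simp add: ac_simps)
qed

lemma DeltaN_eq_path_weight: "DeltaN q k N u =
    (if length u = 2 * N \<and> height u = 0 then path_weight (\<lambda>h. qint q (h + k)) (qint q) 0 u else 0)"
proof (cases "length u = 2 * N \<and> height u = 0")
  case True
  show ?thesis
  proof (cases "u \<in> Cat N")
    case True
    with \<open>length u = 2 * N \<and> height u = 0\<close> show ?thesis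
      by (simp add: DeltaN_def path_weight_eq_prod height_def)
  next
    case False
    with \<open>length u = 2 * N \<and> height u = 0\<close> obtain i where "height (take i u) < 0"
      by (auto simp: Cat_def catalan_def height_def not_le)
    then have "path_weight (\<lambda>h. qint q (h + k)) (qint q) 0 u = 0"
      by (intro path_weight_below_zero) simp_all
    then show ?thesis using False by (simp add: DeltaN_def)
  qed
next
  case False
  then have "u \<notin> Cat N" by (auto simp: Cat_def catalan_def height_def)
  with False show ?thesis by (auto simp: DeltaN_def)
qed

lemma subst_sq_DeltaS: "subst_sq c (DeltaS q k) n u =
    (if n = length u \<and> height u = 0 then path_weight (\<lambda>h. c * qint q (h + k)) (qint q) 0 u else 0)"
proof (cases "n = length u \<and> height u = 0")
  case True
  moreover have "length u = 2 * count_list u X"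
    using count_list_X_height[of u] True by linarith
  ultimately show ?thesis
    by (simp add: subst_sq_def DeltaS_def DeltaN_eq_path_weight path_weight_scale_X)
next
  case False
  then have "\<not> (even n \<and> length u = 2 * (n div 2) \<and> height u = 0)"
    by (auto simp: even_two_times_div_two)
  with False show ?thesis
    unfolding subst_sq_def DeltaS_def DeltaN_eq_path_weight by auto
qed

lemma lop_minus: "lop a (- int l) F n w = F n (replicate l a @ w)"
  by (cases "l = 0") (simp_all add: lop_def)

lemma rop_minus: "rop a (- int l) F n w = F n (w @ replicate l a)"
  by (cases "l = 0") (simp_all add: rop_def)

lemma lop_rop_subst_sq_DeltaS:
  assumes "\<And>h. fx h = c * qint q (h + k)"
  shows "lop X (- int l) (rop Y (- int b) (subst_sq c (DeltaS q k))) = homogeneous (l + b)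
    (\<lambda>v. (\<Prod>i<l. fx (int i)) * qfact q b * path_weight_between fx (qint q) (int l) (int b) v)"
proof (intro ext)
  fix n v
  let ?u = "replicate l X @ v @ replicate b Y"
  have fx: "(\<lambda>h. c * qint q (h + k)) = fx"
    using assms by (simp add: fun_eq_iff)
  have "path_weight fx (qint q) 0 ?u = (\<Prod>i<l. fx (int i)) * qfact q b * path_weight fx (qint q) (int l) v"
    if "int l + height v = int b"
    using that by (simp add: path_weight_append path_weight_replicate_X path_weight_replicate_Y qfact_def)
  then show "lop X (- int l) (rop Y (- int b) (subst_sq c (DeltaS q k))) n v = homogeneous (l + b)
    (\<lambda>v. (\<Prod>i<l. fx (int i)) * qfact q b * path_weight_between fx (qint q) (int l) (int b) v) n v"
    by (auto simp: lop_minus rop_minus subst_sq_DeltaS fx homogeneous_def path_weight_between_def)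
qed

definition zigzag_weight :: "'a::field \<Rightarrow> nat \<Rightarrow> int \<Rightarrow> int \<Rightarrow> word \<Rightarrow> 'a" where
  "zigzag_weight q m = path_weight_between (\<lambda>h. if h = 0 then 1 else 0) (\<lambda>h. if h = 1 then q ^ m else 0)"

lemma length_concat_replicate_YX [simp]: "length (concat (replicate j [Y, X])) = 2 * j"
  by (induction j) simp_all

lemma zigzag_weight_closed_form:
  "zigzag_weight q m 0 1 u = (if \<exists>j. u = X # concat (replicate j [Y, X]) then (q ^ m) ^ (length u div 2) else 0)
 \<and> zigzag_weight q m 1 1 u = (if \<exists>j. u = concat (replicate j [Y, X]) then (q ^ m) ^ (length u div 2) else 0)"
proof (induction u)
  case Nil
  show ?case by (auto simp: zigzag_weight_def)
next
  case (Cons c u)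
  show ?case
  proof (cases c)
    case X
    have "X # u \<noteq> concat (replicate j [Y, X])" for j
      by (cases j) simp_all
    moreover have "zigzag_weight q m 0 1 (X # u) = zigzag_weight q m 1 1 u"
      and "zigzag_weight q m 1 1 (X # u) = 0"
      by (simp_all add: zigzag_weight_def path_weight_between_Cons)
    ultimately show ?thesis
      using Cons.IH X by auto
  next
    case Y
    have "Y # u = concat (replicate j [Y, X]) \<longleftrightarrow> (\<exists>i. j = Suc i \<and> u = X # concat (replicate i [Y, X]))" for j
      by (cases j) auto
    then have "(\<exists>j. Y # u = concat (replicate j [Y, X])) \<longleftrightarrow> (\<exists>j. u = X # concat (replicate j [Y, X]))"
      by auto
    moreover have "zigzag_weight q m 0 1 (Y # u) = 0"
      and "zigzag_weight q m 1 1 (Y # u) = q ^ m * zigzag_weight q m 0 1 u"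
      by (simp_all add: zigzag_weight_def path_weight_between_Cons)
    ultimately show ?thesis
      using Cons.IH Y by auto
  qed
qed

lemma concat_replicate_YX_eq_iff [simp]:
  "concat (replicate j [Y, X]) = concat (replicate k [Y, X]) \<longleftrightarrow> j = k"
proof
  assume "concat (replicate j [Y, X]) = concat (replicate k [Y, X])"
  then have "length (concat (replicate j [Y, X])) = length (concat (replicate k [Y, X]))" by simp
  then show "j = k" by simp
qed simp

lemma shift2_subst_sq_single: "shift2 (subst_sq c (\<lambda>n. single (wd n))) i u =
    (if \<exists>j. i = 2 * j + 2 \<and> u = wd j then c ^ ((i - 2) div 2) else 0)"
proof -
  have "(2 \<le> i \<and> even (i - 2) \<and> u = wd ((i - 2) div 2)) \<longleftrightarrow> (\<exists>j. i = 2 * j + 2 \<and> u = wd j)"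
  proof
    assume "2 \<le> i \<and> even (i - 2) \<and> u = wd ((i - 2) div 2)"
    then show "\<exists>j. i = 2 * j + 2 \<and> u = wd j"
      by (intro exI[of _ "(i - 2) div 2"]) (auto elim!: evenE)
  qed auto
  then show ?thesis
    by (auto simp: shift2_def subst_sq_def single_def)
qed

lemma shift2_subst_sq_Wminus: "shift2 (subst_sq (q ^ m) Wminus) = homogeneous 1 (zigzag_weight q m 0 1)"
proof (intro ext)
  fix i u
  show "shift2 (subst_sq (q ^ m) Wminus) i u = homogeneous 1 (zigzag_weight q m 0 1) i u"
  proof (cases "\<exists>j. u = X # concat (replicate j [Y, X])")
    case True
    then obtain j where "u = X # concat (replicate j [Y, X])" ..
    then show ?thesis
      unfolding Wminus_def shift2_subst_sq_single by (simp add: homogeneous_def zigzag_weight_closed_form)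
  next
    case False
    then show ?thesis
      unfolding Wminus_def shift2_subst_sq_single by (auto simp: homogeneous_def zigzag_weight_closed_form)
  qed
qed

lemma shift2_subst_sq_G: "shift2 (subst_sq (q ^ m) G) = homogeneous 2 (zigzag_weight q m 1 1)"
proof (intro ext)
  fix i u
  show "shift2 (subst_sq (q ^ m) G) i u = homogeneous 2 (zigzag_weight q m 1 1) i u"
  proof (cases "\<exists>j. u = concat (replicate j [Y, X])")
    case True
    then obtain j where "u = concat (replicate j [Y, X])" ..
    then show ?thesis
      unfolding G_def shift2_subst_sq_single by (simp add: homogeneous_def zigzag_weight_closed_form)
  next
    case False
    then show ?thesis
      unfolding G_def shift2_subst_sq_single by (auto simp: homogeneous_def zigzag_weight_closed_form)
  qed
qed

(* V and B weight a path as Delta^(-m-1)(-t^2) and Delta^(-m)(-q^(-1) t^2) do. *)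
lemma path_weight_between_decomposition:
  fixes q :: "'a::field" and m :: nat
  assumes "q \<noteq> 0" and "q - inverse q \<noteq> 0"
  defines "V \<equiv> path_weight_between (\<lambda>h. qint q (int m + 1 - h)) (qint q)"
    and "B \<equiv> path_weight_between (\<lambda>h. inverse q * qint q (int m - h)) (qint q)"
  shows "qint q R * V h R w
    = q powi h * qint q (int m + 1 - h) * vmul q (zigzag_weight q m 0 1) (B h (R - 1)) w
      + qint q h * vmul q (zigzag_weight q m 1 1) (B (h - 1) (R - 1)) w"
proof (induction w arbitrary: h)
  case Nil
  then show ?case by (simp add: V_def B_def vmul_Nil zigzag_weight_def)
next
  case (Cons c w)
  show ?case
  proof (cases c)
    case X
    have "qint q R * V h R (X # w) = qint q (int m + 1 - h) * (qint q R * V (h + 1) R w)"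
      by (simp add: V_def path_weight_between_Cons)
    also have "\<dots> = qint q (int m + 1 - h) * (q powi (h + 1) * qint q (int m - h)
          * vmul q (zigzag_weight q m 0 1) (B (h + 1) (R - 1)) w
        + qint q (h + 1) * vmul q (zigzag_weight q m 1 1) (B h (R - 1)) w)"
      using Cons.IH[of "h + 1"] by simp
    also have "\<dots> = q powi h * qint q (int m + 1 - h) * vmul q (zigzag_weight q m 0 1) (B h (R - 1)) (X # w)
        + qint q h * vmul q (zigzag_weight q m 1 1) (B (h - 1) (R - 1)) (X # w)"
      using qint_add_1[OF assms(1,2), of h] power_int_add_1'[of q h] assms(1)
      by (simp add: vmul_path_weight_between_Cons zigzag_weight_def B_def power2_eq_square algebra_simps)
    finally show ?thesis using X by simp
  next
    case Y
    have "qint q R * V h R (Y # w) = qint q h * (qint q R * V (h - 1) R w)"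
      by (simp add: V_def path_weight_between_Cons)
    also have "\<dots> = qint q h * (q powi (h - 1) * qint q (int m + 1 - (h - 1))
          * vmul q (zigzag_weight q m 0 1) (B (h - 1) (R - 1)) w
        + qint q (h - 1) * vmul q (zigzag_weight q m 1 1) (B (h - 1 - 1) (R - 1)) w)"
      using Cons.IH[of "h - 1"] by simp
    also have "\<dots> = q powi h * qint q (int m + 1 - h) * vmul q (zigzag_weight q m 0 1) (B h (R - 1)) (Y # w)
        + qint q h * vmul q (zigzag_weight q m 1 1) (B (h - 1) (R - 1)) (Y # w)"
      using powi_mult_qint_add_1[OF assms(1,2), of "h - 1" "int m + 1 - h"] power_int_add[of q h "- 2"] assms(1)
      by (simp add: vmul_path_weight_between_Cons zigzag_weight_def B_def algebra_simps)
    finally show ?thesis using Y by simp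
  qed
qed

lemma lop_rop_subst_sq_DeltaS_minus_one:
  "lop X (- int l) (rop Y (- int r) (subst_sq (-1) (DeltaS q (- int m - 1)))) = homogeneous (l + r)
    (\<lambda>w. (\<Prod>i<l. qint q (int m + 1 - int i)) * qfact q r
      * path_weight_between (\<lambda>h. qint q (int m + 1 - h)) (qint q) (int l) (int r) w)"
proof (rule lop_rop_subst_sq_DeltaS)
  fix h
  show "qint q (int m + 1 - h) = -1 * qint q (h + (- int m - 1))"
    using qint_uminus[of q "h + (- int m - 1)"] by (simp add: algebra_simps)
qed

lemma lop_rop_subst_sq_DeltaS_minus_inverse:
  "lop X (- int l) (rop Y (- int r) (subst_sq (- inverse q) (DeltaS q (- int m)))) = homogeneous (l + r)
    (\<lambda>w. (\<Prod>i<l. inverse q * qint q (int m - int i)) * qfact q r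
      * path_weight_between (\<lambda>h. inverse q * qint q (int m - h)) (qint q) (int l) (int r) w)"
proof (rule lop_rop_subst_sq_DeltaS)
  fix h
  show "inverse q * qint q (int m - h) = - inverse q * qint q (h + - int m)"
    using qint_uminus[of q "h + - int m"] by (simp add: algebra_simps)
qed

lemma prod_qint_coeff_Wminus:
  fixes q :: "'a::field"
  assumes "q \<noteq> 0"
  shows "q ^ (2 * l) * qint q (int m + 1) * (\<Prod>i<l. inverse q * qint q (int m - int i))
    = (\<Prod>i<l. qint q (int m + 1 - int i)) * (q ^ l * qint q (int m + 1 - int l))"
proof -
  have "q ^ (2 * l) = q ^ l * q ^ l"
    by (simp add: mult_2 power_add)
  with prod_qint_Suc[OF assms, where l = l and m = m] show ?thesis
    by (simp add: ac_simps)
qed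

lemma prod_qint_coeff_G:
  fixes q :: "'a::field"
  assumes "q \<noteq> 0"
  shows "q powi (int l - 1) * qint q (int l) * qint q (int m + 1) * (\<Prod>i<l - 1. inverse q * qint q (int m - int i))
    = (\<Prod>i<l. qint q (int m + 1 - int i)) * qint q (int l)"
proof (cases l)
  case (Suc l')
  then show ?thesis
    using prod_qint_Suc[OF assms, where l = l' and m = m] by (simp add: ac_simps del: prod.lessThan_Suc)
qed simp

lemma smul_Wminus_DeltaS:
  "smul q (shift2 (subst_sq (q ^ m) Wminus))
      (lop X (- int l) (rop Y (- int r) (subst_sq (- inverse q) (DeltaS q (- int m)))))
    = homogeneous (Suc (l + r)) (\<lambda>w. (\<Prod>i<l. inverse q * qint q (int m - int i)) * qfact q r
        * vmul q (zigzag_weight q m 0 1)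
            (path_weight_between (\<lambda>h. inverse q * qint q (int m - h)) (qint q) (int l) (int r)) w)"
  by (simp add: shift2_subst_sq_Wminus lop_rop_subst_sq_DeltaS_minus_inverse smul_homogeneous
      vmul_scale_right mult.assoc)

lemma sscale_smul_G_DeltaS:
  "sscale (q powi (int l - 1) * qint q (int l) * qint q (int m + 1))
      (smul q (shift2 (subst_sq (q ^ m) G))
        (lop X (1 - int l) (rop Y (- int r) (subst_sq (- inverse q) (DeltaS q (- int m))))))
    = homogeneous (Suc (l + r)) (\<lambda>w. q powi (int l - 1) * qint q (int l) * qint q (int m + 1)
        * ((\<Prod>i<l - 1. inverse q * qint q (int m - int i)) * qfact q r
          * vmul q (zigzag_weight q m 1 1)
              (path_weight_between (\<lambda>h. inverse q * qint q (int m - h)) (qint q) (int l - 1) (int r)) w))"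
proof (cases l)
  case (Suc l')
  have "1 - int (Suc l') = - int l'" by simp
  then show ?thesis
    unfolding Suc
    by (simp add: shift2_subst_sq_G lop_rop_subst_sq_DeltaS_minus_inverse smul_homogeneous
        sscale_homogeneous vmul_scale_right mult.assoc)
qed (simp add: sscale_def homogeneous_def fun_eq_iff)

lemma lop_rop_DeltaS_recursion:
  fixes q :: "'a::field" and m l r :: nat
  assumes q: "q \<noteq> 0" "q - inverse q \<noteq> 0" and "1 \<le> r"
  shows "lop X (- int l) (rop Y (- int r) (subst_sq (-1) (DeltaS q (- int m - 1))))
    = sadd
        (sscale (q ^ (2 * l) * qint q (int m + 1))
          (smul q (shift2 (subst_sq (q ^ m) Wminus))
                  (lop X (- int l) (rop Y (1 - int r) (subst_sq (- inverse q) (DeltaS q (- int m)))))))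
        (sscale (q powi (int l - 1) * qint q (int l) * qint q (int m + 1))
          (smul q (shift2 (subst_sq (q ^ m) G))
                  (lop X (1 - int l) (rop Y (1 - int r) (subst_sq (- inverse q) (DeltaS q (- int m)))))))"
proof -
  obtain r' where r: "r = Suc r'" "1 - int r = - int r'"
    using \<open>1 \<le> r\<close> by (cases r) simp_all
  let ?Q = "\<lambda>k. \<Prod>i<k. qint q (int m + 1 - int i)"
  let ?P = "\<lambda>k. \<Prod>i<k. inverse q * qint q (int m - int i)"
  let ?B = "path_weight_between (\<lambda>h. inverse q * qint q (int m - h)) (qint q)"
  let ?\<Phi>0 = "vmul q (zigzag_weight q m 0 1) (?B (int l) (int r'))"
  let ?\<Phi>1 = "vmul q (zigzag_weight q m 1 1) (?B (int l - 1) (int r'))"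
  let ?cW = "q ^ (2 * l) * qint q (int m + 1)"
  let ?cG = "q powi (int l - 1) * qint q (int l) * qint q (int m + 1)"
  have degree: "Suc (l + r') = l + r"
    using r(1) by simp
  show ?thesis
    unfolding lop_rop_subst_sq_DeltaS_minus_one r(2) smul_Wminus_DeltaS sscale_smul_G_DeltaS degree
      sscale_homogeneous sadd_homogeneous
  proof (rule homogeneous_cong[OF refl])
    fix w
    have "?Q l * qfact q r * path_weight_between (\<lambda>h. qint q (int m + 1 - h)) (qint q) (int l) (int r) w
      = ?Q l * qfact q r' * (q ^ l * qint q (int m + 1 - int l) * ?\<Phi>0 w + qint q (int l) * ?\<Phi>1 w)"
      using path_weight_between_decomposition[OF q, of "int r" m "int l" w] by (simp add: r qfact_Suc)
    also have "\<dots> = (?Q l * (q ^ l * qint q (int m + 1 - int l))) * qfact q r' * ?\<Phi>0 w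
        + (?Q l * qint q (int l)) * qfact q r' * ?\<Phi>1 w"
      by (simp add: algebra_simps)
    also have "\<dots> = ?cW * (?P l * qfact q r' * ?\<Phi>0 w) + ?cG * (?P (l - 1) * qfact q r' * ?\<Phi>1 w)"
      unfolding prod_qint_coeff_Wminus[OF q(1), symmetric] prod_qint_coeff_G[OF q(1), symmetric]
      by (simp add: ac_simps)
    finally show "?Q l * qfact q r * path_weight_between (\<lambda>h. qint q (int m + 1 - h)) (qint q) (int l) (int r) w
      = ?cW * (?P l * qfact q r' * ?\<Phi>0 w) + ?cG * (?P (l - 1) * qfact q r' * ?\<Phi>1 w)" .
  qed
qed

lemma swap_swap [simp]: "swap (swap a) = a"
  by (cases a) (simp_all add: swap_def)

lemma swap_simps [simp]: "swap X = Y" "swap Y = X"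
  by (simp_all add: swap_def)

lemma swap_comp_swap [simp]: "swap \<circ> swap = id"
  by (simp add: fun_eq_iff)

lemma swap_eq_iff [simp]: "swap a = swap b \<longleftrightarrow> a = b"
  by (metis swap_swap)

lemma pairing_swap [simp]: "pairing (swap a) (swap b) = pairing a b"
  by (cases a; cases b) (simp_all add: pairing_def)

lemma single_map_swap: "single u (map swap w) = single (map swap u) w"
  by (auto simp: single_def)

lemma prepend_map_swap: "prepend (swap a) F (map swap w) = prepend a (\<lambda>w'. F (map swap w')) w"
  by (cases w) (auto simp: prepend_def)

lemma qsh_map_swap: "qsh q (map swap u) (map swap v) (map swap w) = qsh q u v w"
proof (induction q u v arbitrary: w rule: qsh.induct)
  case (1 q v)
  then show ?case by (simp add: single_map_swap)
next
  case (2 q a u)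
  then show ?case by (simp add: single_map_swap)
next
  case (3 q a u b v)
  have pairing: "sum_list (map (pairing (swap b)) (swap a # map swap u)) = sum_list (map (pairing b) (a # u))"
    by (simp add: comp_def)
  have "qsh q (map swap (a # u)) (map swap (b # v)) (map swap w)
      = prepend (swap a) (qsh q (map swap u) (map swap (b # v))) (map swap w)
        + q powi (sum_list (map (pairing (swap b)) (swap a # map swap u)))
          * prepend (swap b) (qsh q (map swap (a # u)) (map swap v)) (map swap w)"
    by simp
  then show ?case
    unfolding pairing prepend_map_swap "3.IH" by simp
qed

lemma sum_words_le_map_swap: "(\<Sum>u\<in>words_le n. F (map swap u)) = (\<Sum>u\<in>words_le n. F u)"
  by (rule sum.reindex_bij_witness[of _ "map swap" "map swap"]) (auto simp: words_le_def)

lemma vmul_map_swap: "vmul q (\<lambda>u. f (map swap u)) (\<lambda>v. g (map swap v)) w = vmul q f g (map swap w)"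
proof -
  have "vmul q f g (map swap w) = (\<Sum>u\<in>words_le (length w). \<Sum>v\<in>words_le (length w).
      f (map swap u) * g (map swap v) * qsh q (map swap u) (map swap v) (map swap w))"
    by (simp only: vmul_eq_sum_words_le[of _ "length w" "length w"] length_map
        sum_words_le_map_swap[where F = "\<lambda>u. \<Sum>v\<in>_. f u * g v * qsh q u v (map swap w)"]
        sum_words_le_map_swap[where F = "\<lambda>v. f _ * g v * qsh q _ v (map swap w)"])
  then show ?thesis
    by (simp add: vmul_eq_sum_words_le[of _ "length w" "length w"] qsh_map_swap)
qed

definition swap_ser :: "'a::field ser \<Rightarrow> 'a ser" where
  "swap_ser F = (\<lambda>n w. F n (map swap w))"

lemma smul_swap_ser: "smul q (swap_ser F) (swap_ser F') = swap_ser (smul q F F')"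
  by (simp add: smul_def swap_ser_def vmul_map_swap)

lemma sadd_swap_ser: "sadd (swap_ser F) (swap_ser F') = swap_ser (sadd F F')"
  by (simp add: sadd_def swap_ser_def)

lemma sscale_swap_ser: "sscale c (swap_ser F) = swap_ser (sscale c F)"
  by (simp add: sscale_def swap_ser_def)

lemma shift2_swap_ser: "shift2 (swap_ser F) = swap_ser (shift2 F)"
  by (simp add: shift2_def swap_ser_def)

lemma subst_sq_swap_ser: "subst_sq c (swap_ser F) = swap_ser (subst_sq c F)"
  by (simp add: subst_sq_def swap_ser_def)

lemma map_swap_eq_replicate: "map swap w = replicate n a \<longleftrightarrow> w = replicate n (swap a)"
  by (metis list.map_comp list.map_id map_replicate swap_comp_swap swap_swap)

lemma lop_swap_ser: "lop (swap a) k (swap_ser F) = swap_ser (lop a k F)"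
  by (auto simp: lop_def swap_ser_def take_map drop_map map_swap_eq_replicate fun_eq_iff)

lemma rop_swap_ser: "rop (swap a) k (swap_ser F) = swap_ser (rop a k F)"
  by (auto simp: rop_def swap_ser_def take_map drop_map map_swap_eq_replicate fun_eq_iff)

lemma DeltaTS_eq_swap_ser: "DeltaTS q k = swap_ser (DeltaS q k)"
  by (simp add: DeltaTS_def DeltaS_def swap_ser_def)

lemma Wplus_eq_swap_ser: "Wplus = swap_ser Wminus"
  by (simp add: Wplus_def Wminus_def swap_ser_def single_map_swap map_concat fun_eq_iff)

lemma Gt_eq_swap_ser: "Gt = swap_ser G"
  by (simp add: Gt_def G_def swap_ser_def single_map_swap map_concat fun_eq_iff)

theorem lemma6p7:
  fixes q :: "'a::field_char_0" and m l r :: nat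
  assumes "q \<noteq> 0" and "\<forall>n::nat. 0 < n \<longrightarrow> q ^ n \<noteq> 1"
    and "l \<le> m" and "1 \<le> r" and "r \<le> m"
  shows
   "lop X (- int l) (rop Y (- int r) (subst_sq (-1) (DeltaS q (- int m - 1))))
    = sadd
        (sscale (q ^ (2 * l) * qint q (int m + 1))
          (smul q (shift2 (subst_sq (q ^ m) Wminus))
                  (lop X (- int l) (rop Y (1 - int r) (subst_sq (- inverse q) (DeltaS q (- int m)))))))
        (sscale (q powi (int l - 1) * qint q (int l) * qint q (int m + 1))
          (smul q (shift2 (subst_sq (q ^ m) G))
                  (lop X (1 - int l) (rop Y (1 - int r) (subst_sq (- inverse q) (DeltaS q (- int m)))))))
  \<and> lop Y (- int l) (rop X (- int r) (subst_sq (-1) (DeltaTS q (- int m - 1))))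
    = sadd
        (sscale (q ^ (2 * l) * qint q (int m + 1))
          (smul q (shift2 (subst_sq (q ^ m) Wplus))
                  (lop Y (- int l) (rop X (1 - int r) (subst_sq (- inverse q) (DeltaTS q (- int m)))))))
        (sscale (q powi (int l - 1) * qint q (int l) * qint q (int m + 1))
          (smul q (shift2 (subst_sq (q ^ m) Gt))
                  (lop Y (1 - int l) (rop X (1 - int r) (subst_sq (- inverse q) (DeltaTS q (- int m)))))))"
proof -
  have "q - inverse q \<noteq> 0"
  proof
    assume "q - inverse q = 0"
    with assms(1) have "q ^ 2 = 1"
      by (simp add: field_simps power2_eq_square)
    with assms(2) show False
      by auto
  qed
  with assms(1,4) show ?thesis
    using lop_rop_DeltaS_recursion[where q = q and m = m and l = l and r = r]
    unfolding DeltaTS_eq_swap_ser Wplus_eq_swap_ser Gt_eq_swap_ser subst_sq_swap_ser shift2_swap_ser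
      smul_swap_ser sscale_swap_ser sadd_swap_ser
      lop_swap_ser[of X, unfolded swap_simps] rop_swap_ser[of Y, unfolded swap_simps]
    by simp
qed

end
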